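(* Let $0<x_0\le1$ and $\epsilon\ge0$. Consider the eigenvalue problem $$L_0\Psi=\Phi,\qquad \Phi'+\frac{\epsilon}{1-x^2}\Phi=\mu\,\Psi',\qquad -x_0<x<x_0,$$ for $\Psi$ in the space $X_0$ if $x_0<1$ and in $X$ if $x_0=1$. Then every eigenvalue $\mu$ other than the trivial eigenvalue $\mu=0$ (whose eigenfunctions are the constants) is real and strictly negative.
   Context: $L_0=\frac{d}{dx}\left[(1-x^2)\frac{d}{dx}\right]$. ${\cal H}_0([-x_0,x_0])$ is the space of functions with $\int_{-x_0}^{x_0}(1-x^2)|\Psi'(x)|^2dx<\infty$. For $0<x_0<1$, $X_0=\{\Psi\in{\cal H}_0([-x_0,x_0]):\ \Psi'(\pm x_0)=0\}$; for $x_0=1$, $X=\{\Psi\in{\cal H}_0([-1,1]):\ \lim_{x\to\pm1}(1-x^2)\Psi'(x)=0\}$. $\Psi$ is determined up to an additive constant. A number $\mu\in\mathbb{C}$ is an eigenvalue if there is a nonzero $\Psi$ in the relevant space solving the system classically on $(-x_0,x_0)$ with $\Phi=L_0\Psi$. (This describes symmetry-preserving perturbations of a stationary flow on a sphere, $\epsilon$ being the Reynolds number.) *)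

theory Defs
  imports "HOL-Analysis.Analysis"
begin

text \<open>Psi : (-x0,x0) -> C, with derivative dPsi on the open interval.
  Phi = L0 Psi = d/dx[(1-x^2) Psi'] taken classically.\<close>

definition classical_eigen_solution ::
  "real \<Rightarrow> real \<Rightarrow> complex \<Rightarrow> (real \<Rightarrow> complex) \<Rightarrow> (real \<Rightarrow> complex) \<Rightarrow> bool" where
  "classical_eigen_solution x0 \<epsilon> \<mu> \<Psi> d\<Psi> \<longleftrightarrow>
     (\<exists>\<Phi> d\<Phi>. \<forall>x\<in>{-x0<..<x0}.
        (\<Psi> has_vector_derivative d\<Psi> x) (at x) \<and>
        ((\<lambda>t. complex_of_real (1 - t\<^sup>2) * d\<Psi> t) has_vector_derivative \<Phi> x) (at x) \<and>
        (\<Phi> has_vector_derivative d\<Phi> x) (at x) \<and>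
        d\<Phi> x + complex_of_real (\<epsilon> / (1 - x\<^sup>2)) * \<Phi> x = \<mu> * d\<Psi> x)"

definition in_H0 :: "real \<Rightarrow> (real \<Rightarrow> complex) \<Rightarrow> bool" where
  "in_H0 x0 d\<Psi> \<longleftrightarrow>
     set_integrable lborel {-x0<..<x0} (\<lambda>x. (1 - x\<^sup>2) * (cmod (d\<Psi> x))\<^sup>2)"

text \<open>Boundary conditions: X_0 (x0<1): Psi'(+-x0)=0, read as one-sided limits of Psi';
  X (x0=1): lim_{x->+-1} (1-x^2) Psi'(x) = 0.\<close>
definition boundary_cond :: "real \<Rightarrow> (real \<Rightarrow> complex) \<Rightarrow> bool" where
  "boundary_cond x0 d\<Psi> \<longleftrightarrow>
     (if x0 < 1 then (d\<Psi> \<longlongrightarrow> 0) (at_left x0) \<and> (d\<Psi> \<longlongrightarrow> 0) (at_right (-x0))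
      else ((\<lambda>x. complex_of_real (1 - x\<^sup>2) * d\<Psi> x) \<longlongrightarrow> 0) (at_left 1) \<and>
           ((\<lambda>x. complex_of_real (1 - x\<^sup>2) * d\<Psi> x) \<longlongrightarrow> 0) (at_right (-1)))"

definition is_eigenvalue :: "real \<Rightarrow> real \<Rightarrow> complex \<Rightarrow> bool" where
  "is_eigenvalue x0 \<epsilon> \<mu> \<longleftrightarrow>
     (\<exists>\<Psi> d\<Psi>. classical_eigen_solution x0 \<epsilon> \<mu> \<Psi> d\<Psi> \<and> in_H0 x0 d\<Psi> \<and>
        boundary_cond x0 d\<Psi> \<and> \<not> (\<exists>c. \<forall>x\<in>{-x0<..<x0}. \<Psi> x = c))"

end

theory Submission
  imports Defs
begin

(* With w = (1 - x^2) Psi' and v = exp (eps * artanh x) Phi the eigenvalue equation becomes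
   w' = exp (- eps * artanh x) v,  v' = mu kappa w,  kappa = exp (eps * artanh x) / (1 - x^2) > 0,
   so the flux F = v * cnj w satisfies F' = exp (- eps * artanh x) |v|^2 + mu kappa |w|^2.
   The boundary conditions give w -> 0 at both ends, and v stays bounded there, so F -> 0.
   If mu were not a negative real, Re ((|mu| + cnj mu) F) would be nondecreasing with zero limits
   and strictly increasing where w is nonzero, which is impossible unless Psi' = 0.
   Boundedness of v is the delicate point at the regular singular endpoint x = 1 (and at x = -1
   when eps = 0): comparing w and v with powers of 1 - x on a tail [c, 1) gives the a priori bound
   |w| <= 2 |v| (1 - x)^(1 + eps/2), after which |v'| <= L |v| and Gronwall's inequality applies. *)

section \<open>Comparison estimates\<close>

lemma norm_diff_le_of_deriv_bound:
  fixes f f' :: "real \<Rightarrow> 'a::real_normed_vector"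
  assumes "a \<le> b"
    and f': "\<And>t. a \<le> t \<Longrightarrow> t \<le> b \<Longrightarrow> (f has_vector_derivative f' t) (at t)"
    and \<phi>': "\<And>t. a \<le> t \<Longrightarrow> t \<le> b \<Longrightarrow> (\<phi> has_real_derivative \<phi>' t) (at t)"
    and bound: "\<And>t. a \<le> t \<Longrightarrow> t \<le> b \<Longrightarrow> norm (f' t) \<le> \<phi>' t"
  shows "norm (f b - f a) \<le> \<phi> b - \<phi> a"
proof (cases "a = b")
  case False
  show ?thesis
  proof (rule differentiable_bound_general[where f' = f' and \<phi>' = \<phi>'])
    show "continuous_on {a..b} f"
      using f' by (intro continuous_at_imp_continuous_on ballI has_vector_derivative_continuous) auto
    show "continuous_on {a..b} \<phi>"
      using \<phi>' by (intro continuous_at_imp_continuous_on ballI DERIV_isCont) auto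
  qed (use False assms in \<open>auto simp: has_real_derivative_iff_has_vector_derivative\<close>)
qed simp

lemma norm_le_of_deriv_bound_at_left:
  fixes f f' :: "real \<Rightarrow> 'a::real_normed_vector"
  assumes "x < r"
    and f': "\<And>t. x \<le> t \<Longrightarrow> t < r \<Longrightarrow> (f has_vector_derivative f' t) (at t)"
    and \<phi>': "\<And>t. x \<le> t \<Longrightarrow> t < r \<Longrightarrow> (\<phi> has_real_derivative \<phi>' t) (at t)"
    and bound: "\<And>t. x \<le> t \<Longrightarrow> t < r \<Longrightarrow> norm (f' t) \<le> \<phi>' t"
    and f0: "(f \<longlongrightarrow> 0) (at_left r)" and \<phi>0: "(\<phi> \<longlongrightarrow> 0) (at_left r)"
  shows "norm (f x) \<le> - \<phi> x"
proof -
  have "norm (0 - f x) \<le> 0 - \<phi> x"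
  proof (rule tendsto_le[OF trivial_limit_at_left_real])
    show "((\<lambda>y. \<phi> y - \<phi> x) \<longlongrightarrow> 0 - \<phi> x) (at_left r)"
      by (intro tendsto_intros \<phi>0)
    show "((\<lambda>y. norm (f y - f x)) \<longlongrightarrow> norm (0 - f x)) (at_left r)"
      by (intro tendsto_intros f0)
    show "\<forall>\<^sub>F y in at_left r. norm (f y - f x) \<le> \<phi> y - \<phi> x"
      using eventually_at_left_real[OF \<open>x < r\<close>]
      by eventually_elim (auto intro!: norm_diff_le_of_deriv_bound f' \<phi>' bound)
  qed
  then show ?thesis by simp
qed

lemma bdd_above_norm_at_left:
  fixes f :: "real \<Rightarrow> 'a::real_normed_vector"
  assumes cont: "continuous_on {c..<r} f" and lim: "(f \<longlongrightarrow> L) (at_left r)"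
  shows "bdd_above ((\<lambda>t. norm (f t)) ` {c..<r})"
proof (cases "c < r")
  case True
  obtain d where "d < r" and near: "\<And>t. d < t \<Longrightarrow> t < r \<Longrightarrow> dist (f t) L < 1"
    using tendstoD[OF lim zero_less_one] unfolding eventually_at_left_field by blast
  define m where "m = max c d"
  have "compact (f ` {c..m})"
    using cont True \<open>d < r\<close>
    by (intro compact_continuous_image continuous_on_subset[OF cont]) (auto simp: m_def)
  then obtain B where B: "\<And>t. t \<in> {c..m} \<Longrightarrow> norm (f t) \<le> B"
    by (meson bounded_iff compact_imp_bounded image_eqI)
  have "norm (f t) \<le> max B (norm L + 1)" if "t \<in> {c..<r}" for t
  proof (cases "t \<le> m")
    case True
    then show ?thesis using B that by fastforce
  next
    case False
    then have "dist (f t) L < 1" using near that by (auto simp: m_def)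
    then show ?thesis using norm_triangle_sub[of "f t" L] by (simp add: dist_norm)
  qed
  then show ?thesis by (intro bdd_aboveI2)
qed simp

lemma norm_le_exp_of_norm_deriv_le:
  fixes v v' :: "real \<Rightarrow> 'a::real_inner"
  assumes "c \<le> x"
    and v': "\<And>t. c \<le> t \<Longrightarrow> t \<le> x \<Longrightarrow> (v has_vector_derivative v' t) (at t)"
    and bound: "\<And>t. c \<le> t \<Longrightarrow> t \<le> x \<Longrightarrow> norm (v' t) \<le> L * norm (v t)"
  shows "norm (v x) \<le> norm (v c) * exp (L * (x - c))"
proof -
  define \<phi> where "\<phi> t = (v t \<bullet> v t) * exp (- 2 * L * t)" for t
  have "\<phi> x \<le> \<phi> c"
  proof (rule DERIV_nonpos_imp_nonincreasing[OF \<open>c \<le> x\<close>])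
    fix t assume t: "c \<le> t" "t \<le> x"
    have "(\<phi> has_real_derivative (2 * (v t \<bullet> v' t) - 2 * L * (v t \<bullet> v t)) * exp (- 2 * L * t)) (at t)"
      using v'[OF t] unfolding \<phi>_def has_vector_derivative_def has_field_derivative_def
      by (auto intro!: derivative_eq_intros ext simp: algebra_simps inner_commute)
    moreover have "v t \<bullet> v' t \<le> L * (v t \<bullet> v t)"
      using Cauchy_Schwarz_ineq2[of "v t" "v' t"] mult_left_mono[OF bound[OF t] norm_ge_zero[of "v t"]]
      by (simp add: power2_norm_eq_inner[symmetric] power2_eq_square algebra_simps)
    ultimately show "\<exists>y. (\<phi> has_real_derivative y) (at t) \<and> y \<le> 0"
      by (intro exI conjI) (auto simp: mult_nonpos_nonneg)
  qed
  then have "(norm (v x))\<^sup>2 * exp (- 2 * L * x) \<le> (norm (v c))\<^sup>2 * exp (- 2 * L * c)"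
    by (simp add: \<phi>_def power2_norm_eq_inner)
  then have "(norm (v x))\<^sup>2 * exp (- 2 * L * x) * exp (2 * L * x)
      \<le> (norm (v c))\<^sup>2 * exp (- 2 * L * c) * exp (2 * L * x)"
    by (rule mult_right_mono) simp
  also have "\<dots> = (norm (v c) * exp (L * (x - c)))\<^sup>2"
    by (simp add: power_mult_distrib algebra_simps flip: exp_add exp_of_nat_mult)
  finally have "(norm (v x))\<^sup>2 \<le> (norm (v c) * exp (L * (x - c)))\<^sup>2"
    by (simp add: mult.assoc flip: exp_add)
  then show ?thesis by (rule power2_le_imp_le) simp
qed

lemma Bfun_at_left_of_deriv_bound:
  fixes v v' :: "real \<Rightarrow> 'a::real_normed_vector"
  assumes "\<forall>\<^sub>F t in at_left r. (v has_vector_derivative v' t) (at t) \<and>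
      (g has_real_derivative g' t) (at t) \<and> norm (v' t) \<le> g' t \<and> g t \<le> C"
  shows "Bfun v (at_left r)"
proof -
  obtain m where "m < r" and m: "\<And>t. m < t \<Longrightarrow> t < r \<Longrightarrow> (v has_vector_derivative v' t) (at t) \<and>
      (g has_real_derivative g' t) (at t) \<and> norm (v' t) \<le> g' t \<and> g t \<le> C"
    using assms unfolding eventually_at_left_field by blast
  define c where "c = (m + r) / 2"
  have "m < c" "c < r" using \<open>m < r\<close> by (auto simp: c_def)
  have "norm (v x) \<le> norm (v c) + (C - g c)" if "c \<le> x" "x < r" for x
  proof -
    have "norm (v x - v c) \<le> g x - g c"
      using m \<open>m < c\<close> that by (intro norm_diff_le_of_deriv_bound[where f' = v' and \<phi>' = g']) auto
    then show ?thesis using m[of x] \<open>m < c\<close> that norm_triangle_ineq2[of "v x" "v c"] by auto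
  qed
  then show ?thesis
    by (intro BfunI[where K = "norm (v c) + (C - g c)"]
        eventually_mono[OF eventually_at_left_real[OF \<open>c < r\<close>]]) auto
qed

lemma Bfun_at_right_of_deriv_bound:
  fixes v v' :: "real \<Rightarrow> 'a::real_normed_vector"
  assumes "\<forall>\<^sub>F t in at_right l. (v has_vector_derivative v' t) (at t) \<and>
      (g has_real_derivative g' t) (at t) \<and> norm (v' t) \<le> g' t \<and> C \<le> g t"
  shows "Bfun v (at_right l)"
proof -
  obtain m where "l < m" and m: "\<And>t. l < t \<Longrightarrow> t < m \<Longrightarrow> (v has_vector_derivative v' t) (at t) \<and>
      (g has_real_derivative g' t) (at t) \<and> norm (v' t) \<le> g' t \<and> C \<le> g t"
    using assms unfolding eventually_at_right_field by blast
  define c where "c = (l + m) / 2"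
  have "l < c" "c < m" using \<open>l < m\<close> by (auto simp: c_def)
  have "norm (v x) \<le> norm (v c) + (g c - C)" if "l < x" "x \<le> c" for x
  proof -
    have "norm (v c - v x) \<le> g c - g x"
      using m \<open>c < m\<close> that by (intro norm_diff_le_of_deriv_bound[where f' = v' and \<phi>' = g']) auto
    then show ?thesis
      using m[of x] \<open>c < m\<close> that norm_triangle_ineq2[of "v x" "v c"] by (auto simp: norm_minus_commute)
  qed
  then show ?thesis
    by (intro BfunI[where K = "norm (v c) + (g c - C)"]
        eventually_mono[OF eventually_at_right_real[OF \<open>l < c\<close>]]) auto
qed

lemma Bfun_mult_cnj_tendsto_0:
  fixes v w :: "'a \<Rightarrow> complex"
  assumes "Bfun v F" "(w \<longlongrightarrow> 0) F"
  shows "((\<lambda>t. v t * cnj (w t)) \<longlongrightarrow> 0) F"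
  using bounded_bilinear.Bfun_prod_Zfun[OF bounded_bilinear_mult assms(1)] tendsto_cnj[OF assms(2)]
  by (simp add: tendsto_Zfun_iff)

lemma deriv_eq_0_if_nonneg_and_vanishing_at_ends:
  fixes G G' :: "real \<Rightarrow> real"
  assumes G': "\<And>t. l < t \<Longrightarrow> t < r \<Longrightarrow> (G has_real_derivative G' t) (at t)"
    and nonneg: "\<And>t. l < t \<Longrightarrow> t < r \<Longrightarrow> 0 \<le> G' t"
    and lim_l: "(G \<longlongrightarrow> 0) (at_right l)" and lim_r: "(G \<longlongrightarrow> 0) (at_left r)"
    and x: "l < x" "x < r"
  shows "G' x = 0"
proof -
  have mono: "G y \<le> G z" if "l < y" "y \<le> z" "z < r" for y z
    using that G' nonneg by (intro DERIV_nonneg_imp_nondecreasing[of y z G]) force+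
  have zero: "G y = 0" if "l < y" "y < r" for y
  proof (rule antisym)
    show "G y \<le> 0"
      by (rule tendsto_lowerbound[OF lim_r _ trivial_limit_at_left_real])
        (use eventually_at_left_real[OF \<open>y < r\<close>] mono that in \<open>auto elim!: eventually_mono\<close>)
    show "0 \<le> G y"
      by (rule tendsto_upperbound[OF lim_l _ trivial_limit_at_right_real])
        (use eventually_at_right_real[OF \<open>l < y\<close>] mono that in \<open>auto elim!: eventually_mono\<close>)
  qed
  have "((\<lambda>_. 0) has_real_derivative G' x) (at x)"
    by (rule has_field_derivative_transform_within_open[OF G'[OF x], of "{l<..<r}"])
      (use x zero in auto)
  then show ?thesis using DERIV_unique DERIV_const by blast
qed

lemma vector_derivative_nonzero_if_nonconstant:
  fixes f f' :: "real \<Rightarrow> 'a::real_normed_vector"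
  assumes "convex S" and f': "\<And>x. x \<in> S \<Longrightarrow> (f has_vector_derivative f' x) (at x)"
    and "\<not> (\<exists>c. \<forall>x\<in>S. f x = c)"
  obtains x where "x \<in> S" "f' x \<noteq> 0"
  using has_vector_derivative_zero_constant[OF \<open>convex S\<close>, of f] f' assms(3)
  by (metis has_vector_derivative_at_within)

lemma has_vector_derivative_reflect:
  fixes f :: "real \<Rightarrow> 'a::real_normed_vector"
  assumes "(f has_vector_derivative f') (at (- t))"
  shows "((\<lambda>t. f (- t)) has_vector_derivative - f') (at t)"
proof -
  have "(uminus has_vector_derivative -1) (at t)"
    by (auto intro!: derivative_eq_intros simp flip: has_real_derivative_iff_has_vector_derivative)
  from vector_diff_chain_at[OF this] show ?thesis
    using assms by (simp add: o_def)
qed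

section \<open>A regular singular endpoint\<close>

lemma one_minus_powr_div_has_real_derivative:
  fixes t q :: real
  assumes "t < 1" "q \<noteq> 0"
  shows "((\<lambda>t. (1 - t) powr q / q) has_real_derivative - ((1 - t) powr (q - 1))) (at t)"
  using assms by (auto intro!: derivative_eq_intros)

lemma tendsto_one_minus_powr_at_left_1:
  assumes "0 < q"
  shows "((\<lambda>t::real. (1 - t) powr q) \<longlongrightarrow> 0) (at_left 1)"
proof (rule tendsto_zero_powrI[OF _ tendsto_const _ assms])
  show "((\<lambda>t::real. 1 - t) \<longlongrightarrow> 0) (at_left 1)"
    using tendsto_diff[OF tendsto_const tendsto_ident_at, of 1 1 "{..<1}"] by simp
  show "\<forall>\<^sub>F t in at_left (1::real). 0 \<le> 1 - t"
    by (simp add: eventually_at_left_field) (meson less_imp_le zero_less_one)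
qed

lemma singular_endpoint_norm_le:
  fixes v w :: "real \<Rightarrow> complex" and \<kappa> :: "real \<Rightarrow> real"
  assumes "0 \<le> c" "c \<le> x" "x < 1" "0 \<le> a" "0 \<le> K"
    and v': "\<And>t. c \<le> t \<Longrightarrow> t < 1 \<Longrightarrow> (v has_vector_derivative \<mu> * of_real (\<kappa> t) * w t) (at t)"
    and \<kappa>: "\<And>t. c \<le> t \<Longrightarrow> t < 1 \<Longrightarrow> \<bar>\<kappa> t\<bar> \<le> K * (1 - t) powr (- a - 1)"
    and N: "\<And>t. c \<le> t \<Longrightarrow> t < 1 \<Longrightarrow> norm (w t) \<le> N"
  shows "norm (v x) \<le> norm (v c) + cmod \<mu> * K * N / (a + 1/2) * (1 - x) powr (- a - 1/2)"
proof -
  have "c < 1" using assms by linarith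
  have "0 \<le> N" using N[of c] \<open>c < 1\<close> by (auto intro: order_trans[OF norm_ge_zero])
  define M where "M = cmod \<mu> * K * N"
  define \<phi> where "\<phi> s = - M * ((1 - s) powr (- a - 1/2) / (- a - 1/2))" for s
  (* The bound on kappa is weakened by a factor (1 - s) powr (- 1/2), so that the
     comparison function is a power of 1 - s even when a = 0. *)
  have "norm (v x - v c) \<le> \<phi> x - \<phi> c"
  proof (rule norm_diff_le_of_deriv_bound[where \<phi>' = "\<lambda>s. M * (1 - s) powr (- a - 3/2)"])
    fix s assume s: "c \<le> s" "s \<le> x"
    then have "s < 1" using assms by linarith
    have "- a - 3/2 = - a - 1/2 - 1" by simp
    have "(\<phi> has_real_derivative - M * - ((1 - s) powr (- a - 1/2 - 1))) (at s)"
      unfolding \<phi>_def using \<open>s < 1\<close> \<open>0 \<le> a\<close>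
      by (intro DERIV_cmult one_minus_powr_div_has_real_derivative) auto
    then show "(\<phi> has_real_derivative M * (1 - s) powr (- a - 3/2)) (at s)"
      by (simp only: minus_mult_minus flip: \<open>- a - 3/2 = - a - 1/2 - 1\<close>)
    have "(1 - s) powr (- a - 1) \<le> (1 - s) powr (- a - 3/2)"
      using assms s \<open>s < 1\<close> by (intro powr_mono') auto
    then have "\<bar>\<kappa> s\<bar> \<le> K * (1 - s) powr (- a - 3/2)"
      using \<kappa>[of s] mult_left_mono[of _ _ K] \<open>0 \<le> K\<close> s \<open>s < 1\<close> by fastforce
    then have "cmod \<mu> * \<bar>\<kappa> s\<bar> * norm (w s) \<le> cmod \<mu> * (K * (1 - s) powr (- a - 3/2)) * N"
      using N[of s] s \<open>s < 1\<close> \<open>0 \<le> K\<close> by (intro mult_mono mult_left_mono) auto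
    then show "norm (\<mu> * of_real (\<kappa> s) * w s) \<le> M * (1 - s) powr (- a - 3/2)"
      by (simp add: norm_mult M_def algebra_simps)
  qed (use assms v' in auto)
  moreover have "- M * (P / (- a - 1/2)) = M / (a + 1/2) * P" for P
    using \<open>0 \<le> a\<close> by (simp add: field_simps)
  then have "\<phi> x = M / (a + 1/2) * (1 - x) powr (- a - 1/2)" "0 \<le> \<phi> c"
    using \<open>0 \<le> K\<close> \<open>0 \<le> N\<close> \<open>0 \<le> a\<close> by (simp_all add: \<phi>_def M_def)
  ultimately show ?thesis using norm_triangle_ineq2[of "v x" "v c"] by (simp add: M_def)
qed

lemma singular_endpoint_tail_bound:
  fixes v w :: "real \<Rightarrow> complex" and \<rho> \<kappa> :: "real \<Rightarrow> real"
  assumes "0 \<le> c" "c \<le> x" "x < 1" "0 \<le> a" "0 \<le> K"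
    and w': "\<And>t. c \<le> t \<Longrightarrow> t < 1 \<Longrightarrow> (w has_vector_derivative of_real (\<rho> t) * v t) (at t)"
    and v': "\<And>t. c \<le> t \<Longrightarrow> t < 1 \<Longrightarrow> (v has_vector_derivative \<mu> * of_real (\<kappa> t) * w t) (at t)"
    and \<rho>: "\<And>t. c \<le> t \<Longrightarrow> t < 1 \<Longrightarrow> \<bar>\<rho> t\<bar> \<le> (1 - t) powr a"
    and \<kappa>: "\<And>t. c \<le> t \<Longrightarrow> t < 1 \<Longrightarrow> \<bar>\<kappa> t\<bar> \<le> K * (1 - t) powr (- a - 1)"
    and N: "\<And>t. c \<le> t \<Longrightarrow> t < 1 \<Longrightarrow> norm (w t) \<le> N"
    and w0: "(w \<longlongrightarrow> 0) (at_left 1)"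
  shows "norm (w x) \<le> norm (v c) * (1 - x) powr (a + 1) + 4 * cmod \<mu> * K * N * (1 - x) powr (1/2)"
proof -
  have "c < 1" using assms by linarith
  have "0 \<le> N" using N[of c] \<open>c < 1\<close> by (auto intro: order_trans[OF norm_ge_zero])
  define M where "M = cmod \<mu> * K * N"
  have "0 \<le> M" using \<open>0 \<le> K\<close> \<open>0 \<le> N\<close> by (simp add: M_def)
  define \<phi> where "\<phi> s = - (norm (v c) * ((1 - s) powr (a + 1) / (a + 1))
    + M / (a + 1/2) * ((1 - s) powr (1/2) / (1/2)))" for s
  have "norm (w x) \<le> - \<phi> x"
  proof (rule norm_le_of_deriv_bound_at_left[where f = w and \<phi> = \<phi> and r = 1
        and \<phi>' = "\<lambda>s. norm (v c) * (1 - s) powr a + M / (a + 1/2) * (1 - s) powr (- 1/2)"])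
    fix s assume s: "x \<le> s" "s < 1"
    have "(\<phi> has_real_derivative - (norm (v c) * - ((1 - s) powr (a + 1 - 1))
      + M / (a + 1/2) * - ((1 - s) powr (1/2 - 1)))) (at s)"
      unfolding \<phi>_def using \<open>s < 1\<close> \<open>0 \<le> a\<close>
      by (intro DERIV_minus DERIV_add DERIV_cmult one_minus_powr_div_has_real_derivative) auto
    then show "(\<phi> has_real_derivative
        norm (v c) * (1 - s) powr a + M / (a + 1/2) * (1 - s) powr (- 1/2)) (at s)"
      by (simp add: add.commute)
    have "\<bar>\<rho> s\<bar> * norm (v s) \<le> (1 - s) powr a * (norm (v c) + M / (a + 1/2) * (1 - s) powr (- a - 1/2))"
      using \<rho>[of s] singular_endpoint_norm_le[where c = c and x = s and v = v and w = w and \<kappa> = \<kappa>]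
        s assms
      by (intro mult_mono) (auto simp: M_def)
    also have "\<dots> = norm (v c) * (1 - s) powr a + M / (a + 1/2) * (1 - s) powr (- 1/2)"
    proof -
      have "(1 - s) powr a * (1 - s) powr (- a - 1/2) = (1 - s) powr (- 1/2)"
        by (simp flip: powr_add)
      then show ?thesis by (simp add: distrib_left mult.left_commute)
    qed
    finally show "norm (of_real (\<rho> s) * v s) \<le> \<dots>" by (simp add: norm_mult)
  next
    have lim: "((\<lambda>s. (1 - s) powr q / q) \<longlongrightarrow> 0) (at_left 1)" if "0 < q" for q :: real
      using tendsto_divide_zero[OF tendsto_one_minus_powr_at_left_1[OF that]] .
    show "(\<phi> \<longlongrightarrow> 0) (at_left 1)"
      unfolding \<phi>_def using \<open>0 \<le> a\<close>
      by (intro tendsto_minus[where a = 0, simplified] tendsto_add_zero tendsto_mult_right_zero lim) auto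
  qed (use assms in auto)
  also have "\<dots> \<le> norm (v c) * (1 - x) powr (a + 1) + 4 * M * (1 - x) powr (1/2)"
  proof -
    have "norm (v c) * ((1 - x) powr (a + 1) / (a + 1)) \<le> norm (v c) * (1 - x) powr (a + 1)"
      using \<open>0 \<le> a\<close> by (intro mult_left_mono) (auto simp: divide_le_eq mult_le_cancel_left1)
    moreover have "M / (a + 1/2) * ((1 - x) powr (1/2) / (1/2)) \<le> 4 * M * (1 - x) powr (1/2)"
      using mult_right_mono[of 1 "2 * a + 1" "M * (1 - x) powr (1/2)"] \<open>0 \<le> a\<close> \<open>0 \<le> M\<close>
      by (simp add: divide_le_eq algebra_simps)
    ultimately show ?thesis by (simp add: \<phi>_def)
  qed
  finally show ?thesis by (simp add: M_def)
qed

lemma singular_endpoint_a_priori_bound: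
  fixes v w :: "real \<Rightarrow> complex" and \<rho> \<kappa> :: "real \<Rightarrow> real"
  assumes "b < 1" "0 \<le> a" "0 \<le> K"
    and w': "\<And>t. b < t \<Longrightarrow> t < 1 \<Longrightarrow> (w has_vector_derivative of_real (\<rho> t) * v t) (at t)"
    and v': "\<And>t. b < t \<Longrightarrow> t < 1 \<Longrightarrow> (v has_vector_derivative \<mu> * of_real (\<kappa> t) * w t) (at t)"
    and \<rho>: "\<And>t. b < t \<Longrightarrow> t < 1 \<Longrightarrow> \<bar>\<rho> t\<bar> \<le> (1 - t) powr a"
    and \<kappa>: "\<And>t. b < t \<Longrightarrow> t < 1 \<Longrightarrow> \<bar>\<kappa> t\<bar> \<le> K * (1 - t) powr (- a - 1)"
    and w0: "(w \<longlongrightarrow> 0) (at_left 1)"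
  shows "\<forall>\<^sub>F c in at_left 1. norm (w c) \<le> 2 * norm (v c) * (1 - c) powr (a + 1)"
proof -
  have "((\<lambda>c. 4 * cmod \<mu> * K * (1 - c) powr (1/2)) \<longlongrightarrow> 0) (at_left 1)"
    by (intro tendsto_mult_right_zero tendsto_one_minus_powr_at_left_1) simp
  then have "\<forall>\<^sub>F c in at_left 1. 4 * cmod \<mu> * K * (1 - c) powr (1/2) < 1/2"
    by (rule order_tendstoD) simp
  moreover have "\<forall>\<^sub>F c in at_left 1. c \<in> {max b 0<..<1}"
    using \<open>b < 1\<close> by (intro eventually_at_left_real) simp
  ultimately show ?thesis
  proof eventually_elim
    case (elim c)
    define S where "S = {c..<1}"
    have "continuous_on S w"
      using elim by (intro continuous_at_imp_continuous_on ballI has_vector_derivative_continuous[OF w'])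
        (auto simp: S_def)
    then have bdd: "bdd_above ((\<lambda>t. norm (w t)) ` S)"
      unfolding S_def by (rule bdd_above_norm_at_left[OF _ w0])
    define N where "N = (SUP t\<in>S. norm (w t))"
    have w_le_N: "norm (w t) \<le> N" if "t \<in> S" for t
      unfolding N_def using that bdd by (rule cSUP_upper)
    have "0 \<le> N" using w_le_N[of c] elim by (auto simp: S_def intro: order_trans[OF norm_ge_zero])
    have "norm (w x) \<le> norm (v c) * (1 - c) powr (a + 1) + N / 2" if "x \<in> S" for x
    proof -
      have "norm (w x) \<le> norm (v c) * (1 - x) powr (a + 1) + 4 * cmod \<mu> * K * N * (1 - x) powr (1/2)"
        by (rule singular_endpoint_tail_bound[where \<rho> = \<rho> and \<kappa> = \<kappa>])
          (use elim that w_le_N in \<open>auto simp: S_def intro: w' v' \<rho> \<kappa> w0 assms(2,3)\<close>)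
      also have "\<dots> \<le> norm (v c) * (1 - c) powr (a + 1) + (4 * cmod \<mu> * K * N) * (1 - c) powr (1/2)"
        using that elim \<open>0 \<le> a\<close> \<open>0 \<le> N\<close> \<open>0 \<le> K\<close>
        by (intro add_mono mult_left_mono powr_mono2) (auto simp: S_def)
      also have "\<dots> = norm (v c) * (1 - c) powr (a + 1) + N * (4 * cmod \<mu> * K * (1 - c) powr (1/2))"
        by (simp add: ac_simps)
      also have "\<dots> \<le> norm (v c) * (1 - c) powr (a + 1) + N * (1/2)"
        using elim \<open>0 \<le> N\<close> by (intro add_left_mono mult_left_mono) auto
      finally show ?thesis by simp
    qed
    then have "N \<le> norm (v c) * (1 - c) powr (a + 1) + N / 2"
      unfolding N_def using elim by (intro cSUP_least) (auto simp: S_def)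
    then show ?case using w_le_N[of c] elim by (simp add: S_def)
  qed
qed

lemma singular_endpoint_Bfun:
  fixes v w :: "real \<Rightarrow> complex" and \<rho> \<kappa> :: "real \<Rightarrow> real"
  assumes "b < 1" "0 \<le> a" "0 \<le> K"
    and w': "\<And>t. b < t \<Longrightarrow> t < 1 \<Longrightarrow> (w has_vector_derivative of_real (\<rho> t) * v t) (at t)"
    and v': "\<And>t. b < t \<Longrightarrow> t < 1 \<Longrightarrow> (v has_vector_derivative \<mu> * of_real (\<kappa> t) * w t) (at t)"
    and \<rho>: "\<And>t. b < t \<Longrightarrow> t < 1 \<Longrightarrow> \<bar>\<rho> t\<bar> \<le> (1 - t) powr a"
    and \<kappa>: "\<And>t. b < t \<Longrightarrow> t < 1 \<Longrightarrow> \<bar>\<kappa> t\<bar> \<le> K * (1 - t) powr (- a - 1)"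
    and w0: "(w \<longlongrightarrow> 0) (at_left 1)"
  shows "Bfun v (at_left 1)"
proof -
  obtain d where "d < 1" and a_priori:
      "\<And>t. d < t \<Longrightarrow> t < 1 \<Longrightarrow> norm (w t) \<le> 2 * norm (v t) * (1 - t) powr (a + 1)"
    using singular_endpoint_a_priori_bound[OF assms] unfolding eventually_at_left_field by blast
  define c where "c = (max b d + 1) / 2"
  have c: "b < c" "d < c" "c < 1" using \<open>b < 1\<close> \<open>d < 1\<close> by (auto simp: c_def)
  have v'_bound: "norm (\<mu> * of_real (\<kappa> t) * w t) \<le> 2 * cmod \<mu> * K * norm (v t)"
    if "c \<le> t" "t < 1" for t
  proof -
    have "cmod \<mu> * \<bar>\<kappa> t\<bar> * norm (w t)
        \<le> cmod \<mu> * (K * (1 - t) powr (- a - 1)) * (2 * norm (v t) * (1 - t) powr (a + 1))"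
      using that c \<kappa>[of t] a_priori[of t] by (intro mult_mono mult_left_mono) auto
    also have "\<dots> = 2 * cmod \<mu> * K * norm (v t) * ((1 - t) powr (- a - 1) * (1 - t) powr (a + 1))"
      by (simp only: ac_simps)
    also have "(1 - t) powr (- a - 1) * (1 - t) powr (a + 1) = 1"
      using that by (simp flip: powr_add)
    finally show ?thesis by (simp add: norm_mult)
  qed
  have "norm (v x) \<le> norm (v c) * exp (2 * cmod \<mu> * K * (1 - c))" if "c \<le> x" "x < 1" for x
  proof -
    have "norm (v x) \<le> norm (v c) * exp (2 * cmod \<mu> * K * (x - c))"
      by (rule norm_le_exp_of_norm_deriv_le[where v' = "\<lambda>t. \<mu> * of_real (\<kappa> t) * w t"])
        (use that c v' v'_bound in auto)
    also have "\<dots> \<le> norm (v c) * exp (2 * cmod \<mu> * K * (1 - c))"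
    proof -
      have "cmod \<mu> * K * (x - c) \<le> cmod \<mu> * K * (1 - c)"
        using that \<open>0 \<le> K\<close> by (intro mult_left_mono) auto
      then show ?thesis by (intro mult_left_mono) auto
    qed
    finally show ?thesis .
  qed
  then show ?thesis
    by (intro BfunI[where K = "norm (v c) * exp (2 * cmod \<mu> * K * (1 - c))"]
        eventually_mono[OF eventually_at_left_real[OF \<open>c < 1\<close>]]) auto
qed

section \<open>The energy identity\<close>

lemma cmod_add_Re_eq_0_iff: "cmod z + Re z = 0 \<longleftrightarrow> z \<in> \<real> \<and> Re z \<le> 0"
proof
  assume *: "cmod z + Re z = 0"
  then have "(Re z)\<^sup>2 + (Im z)\<^sup>2 = (Re z)\<^sup>2"
    by (metis add.inverse_unique cmod_power2 power2_minus)
  moreover have "Re z \<le> 0" using * norm_ge_zero[of z] by linarith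
  ultimately show "z \<in> \<real> \<and> Re z \<le> 0" by (simp add: complex_is_Real_iff)
qed (auto simp: complex_is_Real_iff cmod_eq_Re)

lemma flux_has_vector_derivative:
  fixes v w :: "real \<Rightarrow> complex"
  assumes "(w has_vector_derivative of_real \<rho> * v t) (at t)"
    and "(v has_vector_derivative \<mu> * of_real \<kappa> * w t) (at t)"
  shows "((\<lambda>t. v t * cnj (w t)) has_vector_derivative
    of_real (\<rho> * (cmod (v t))\<^sup>2) + \<mu> * of_real (\<kappa> * (cmod (w t))\<^sup>2)) (at t)"
proof -
  have "((\<lambda>t. v t * cnj (w t)) has_vector_derivative
      \<mu> * of_real \<kappa> * w t * cnj (w t) + v t * cnj (of_real \<rho> * v t)) (at t)"
    using has_vector_derivative_mult[OF assms(2) has_vector_derivative_cnj[OF assms(1)]]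
    by (simp add: algebra_simps)
  moreover have "\<mu> * of_real \<kappa> * w t * cnj (w t) + v t * cnj (of_real \<rho> * v t)
      = of_real (\<rho> * (cmod (v t))\<^sup>2) + \<mu> * of_real (\<kappa> * (cmod (w t))\<^sup>2)"
    unfolding of_real_mult complex_norm_square by (simp add: algebra_simps)
  ultimately show ?thesis by simp
qed

lemma eigenvalue_neg_real_if_flux_vanishes:
  fixes v w :: "real \<Rightarrow> complex" and \<rho> \<kappa> :: "real \<Rightarrow> real"
  assumes w': "\<And>t. l < t \<Longrightarrow> t < r \<Longrightarrow> (w has_vector_derivative of_real (\<rho> t) * v t) (at t)"
    and v': "\<And>t. l < t \<Longrightarrow> t < r \<Longrightarrow> (v has_vector_derivative \<mu> * of_real (\<kappa> t) * w t) (at t)"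
    and \<rho>: "\<And>t. l < t \<Longrightarrow> t < r \<Longrightarrow> 0 \<le> \<rho> t" and \<kappa>: "\<And>t. l < t \<Longrightarrow> t < r \<Longrightarrow> 0 < \<kappa> t"
    and lim_l: "((\<lambda>t. v t * cnj (w t)) \<longlongrightarrow> 0) (at_right l)"
    and lim_r: "((\<lambda>t. v t * cnj (w t)) \<longlongrightarrow> 0) (at_left r)"
    and x: "l < x" "x < r" "w x \<noteq> 0" and "\<mu> \<noteq> 0"
  shows "\<mu> \<in> \<real> \<and> Re \<mu> < 0"
proof (rule ccontr)
  assume "\<not> (\<mu> \<in> \<real> \<and> Re \<mu> < 0)"
  with \<open>\<mu> \<noteq> 0\<close> have "cmod \<mu> + Re \<mu> \<noteq> 0"
    by (auto simp: cmod_add_Re_eq_0_iff complex_is_Real_iff complex_eq_iff)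
  then have pos: "0 < cmod \<mu> + Re \<mu>"
    using abs_Re_le_cmod[of \<mu>] by linarith
  define c where "c = of_real (cmod \<mu>) + cnj \<mu>"
  define G where "G t = Re (c * (v t * cnj (w t)))" for t
  define G' where "G' t = Re c * (\<rho> t * (cmod (v t))\<^sup>2) + Re (c * \<mu>) * (\<kappa> t * (cmod (w t))\<^sup>2)" for t
  have "Re (c * \<mu>) = cmod \<mu> * (cmod \<mu> + Re \<mu>)"
    using cmod_power2[of \<mu>] by (simp add: c_def algebra_simps power2_eq_square)
  then have "0 < Re (c * \<mu>)" using pos \<open>\<mu> \<noteq> 0\<close> by simp
  have "Re c \<ge> 0" using pos by (simp add: c_def)
  have "(G has_real_derivative G' t) (at t)" if "l < t" "t < r" for t
    using has_field_derivative_Re[OF has_vector_derivative_mult_right[OF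
          flux_has_vector_derivative[OF w'[OF that] v'[OF that]], of c]]
    by (simp add: G_def[abs_def] G'_def algebra_simps)
  then have "G' x = 0"
  proof (rule deriv_eq_0_if_nonneg_and_vanishing_at_ends[OF _ _ _ _ x(1,2)])
    show "0 \<le> G' t" if "l < t" "t < r" for t
      using \<rho>[OF that] \<kappa>[OF that] \<open>Re c \<ge> 0\<close> \<open>0 < Re (c * \<mu>)\<close> by (simp add: G'_def)
    show "(G \<longlongrightarrow> 0) (at_right l)" "(G \<longlongrightarrow> 0) (at_left r)"
      unfolding G_def using tendsto_Re[OF tendsto_mult_right_zero[OF lim_l]]
        tendsto_Re[OF tendsto_mult_right_zero[OF lim_r]]
      by auto
  qed
  moreover have "0 < G' x"
    using \<rho>[OF x(1,2)] \<kappa>[OF x(1,2)] x(3) \<open>Re c \<ge> 0\<close> \<open>0 < Re (c * \<mu>)\<close>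
    by (simp add: G'_def add_nonneg_pos)
  ultimately show False by simp
qed

section \<open>The eigenvalue problem\<close>

lemma exp_mult_artanh:
  fixes \<epsilon> t :: real
  assumes "\<bar>t\<bar> < 1"
  shows "exp (\<epsilon> * artanh t) = (1 + t) powr (\<epsilon> / 2) * (1 - t) powr (- \<epsilon> / 2)"
proof -
  have "0 < 1 + t" "0 < 1 - t" using assms by auto
  then show ?thesis
    by (simp add: artanh_def powr_def ln_div algebra_simps diff_divide_distrib flip: exp_add)
qed

lemma exp_artanh_div_eq:
  fixes \<epsilon> t :: real
  assumes "\<bar>t\<bar> < 1"
  shows "exp (\<epsilon> * artanh t) / (1 - t\<^sup>2) = (1 + t) powr (\<epsilon> / 2 - 1) * (1 - t) powr (- \<epsilon> / 2 - 1)"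
proof -
  have "0 < 1 + t" "0 < 1 - t" using assms by auto
  moreover have "1 - t\<^sup>2 = (1 + t) * (1 - t)" by (simp add: algebra_simps power2_eq_square)
  ultimately show ?thesis
    using assms by (simp add: exp_mult_artanh powr_diff)
qed

lemma exp_neg_artanh_le:
  fixes \<epsilon> t :: real
  assumes "0 \<le> t" "t < 1" "0 \<le> \<epsilon>"
  shows "exp (- \<epsilon> * artanh t) \<le> (1 - t) powr (\<epsilon> / 2)"
proof -
  have "(1 + t) powr (- \<epsilon> / 2) \<le> (1 + t) powr 0"
    using assms by (intro powr_mono) auto
  then show ?thesis
    using assms exp_mult_artanh[of t "- \<epsilon>"] mult_right_mono[of _ 1 "(1 - t) powr (\<epsilon> / 2)"]
    by simp
qed

lemma exp_artanh_div_le_nonneg: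
  fixes \<epsilon> t :: real
  assumes "0 \<le> t" "t < 1" "0 \<le> \<epsilon>"
  shows "exp (\<epsilon> * artanh t) / (1 - t\<^sup>2) \<le> 2 powr (\<epsilon> / 2) * (1 - t) powr (- \<epsilon> / 2 - 1)"
proof -
  have "(1 + t) powr (\<epsilon> / 2 - 1) \<le> (1 + t) powr (\<epsilon> / 2)"
    using assms by (intro powr_mono) auto
  also have "\<dots> \<le> 2 powr (\<epsilon> / 2)"
    using assms by (intro powr_mono2) auto
  finally show ?thesis
    using assms by (simp add: exp_artanh_div_eq mult_right_mono)
qed

lemma exp_artanh_div_le_nonpos:
  fixes \<epsilon> t :: real
  assumes "-1 < t" "t \<le> 0" "0 \<le> \<epsilon>"
  shows "exp (\<epsilon> * artanh t) / (1 - t\<^sup>2) \<le> (1 + t) powr (\<epsilon> / 2 - 1)"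
proof -
  have "(1 - t) powr (- \<epsilon> / 2 - 1) \<le> (1 - t) powr 0"
    using assms by (intro powr_mono) auto
  then show ?thesis
    using assms mult_left_mono[of _ 1 "(1 + t) powr (\<epsilon> / 2 - 1)"] by (simp add: exp_artanh_div_eq)
qed

(* exp (eps * artanh x) is an integrating factor of Phi' + eps Phi / (1 - x^2). *)
definition first_order_system ::
  "real \<Rightarrow> complex \<Rightarrow> real \<Rightarrow> (real \<Rightarrow> complex) \<Rightarrow> (real \<Rightarrow> complex) \<Rightarrow> bool" where
  "first_order_system \<epsilon> \<mu> x0 w v \<longleftrightarrow> (\<forall>t\<in>{-x0<..<x0}.
     (w has_vector_derivative of_real (exp (- \<epsilon> * artanh t)) * v t) (at t) \<and>
     (v has_vector_derivative \<mu> * of_real (exp (\<epsilon> * artanh t) / (1 - t\<^sup>2)) * w t) (at t))"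

lemma classical_eigen_solution_first_order_system:
  assumes "classical_eigen_solution x0 \<epsilon> \<mu> \<Psi> d\<Psi>" "x0 \<le> 1"
  obtains v where "first_order_system \<epsilon> \<mu> x0 (\<lambda>t. complex_of_real (1 - t\<^sup>2) * d\<Psi> t) v"
proof -
  obtain \<Phi> d\<Phi> where sol: "\<And>t. t \<in> {-x0<..<x0} \<Longrightarrow>
      ((\<lambda>t. complex_of_real (1 - t\<^sup>2) * d\<Psi> t) has_vector_derivative \<Phi> t) (at t) \<and>
      (\<Phi> has_vector_derivative d\<Phi> t) (at t) \<and>
      d\<Phi> t + complex_of_real (\<epsilon> / (1 - t\<^sup>2)) * \<Phi> t = \<mu> * d\<Psi> t"
    using assms(1) unfolding classical_eigen_solution_def by blast
  define v where "v t = of_real (exp (\<epsilon> * artanh t)) * \<Phi> t" for t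
  have "first_order_system \<epsilon> \<mu> x0 (\<lambda>t. complex_of_real (1 - t\<^sup>2) * d\<Psi> t) v"
    unfolding first_order_system_def
  proof (intro ballI conjI)
    fix t assume t: "t \<in> {-x0<..<x0}"
    define e where "e = exp (\<epsilon> * artanh t)"
    have "\<bar>t\<bar> < 1" using t assms(2) by auto
    then have "1 - t\<^sup>2 \<noteq> 0" by (simp flip: abs_square_less_1)
    have "exp (- \<epsilon> * artanh t) * e = 1" by (simp add: e_def flip: exp_add)
    then have "\<Phi> t = of_real (exp (- \<epsilon> * artanh t)) * v t"
      by (simp add: v_def e_def mult.assoc flip: of_real_mult)
    with sol[OF t] show "((\<lambda>t. complex_of_real (1 - t\<^sup>2) * d\<Psi> t) has_vector_derivative
        of_real (exp (- \<epsilon> * artanh t)) * v t) (at t)"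
      by simp
    have "((\<lambda>t. exp (\<epsilon> * artanh t)) has_real_derivative e * (\<epsilon> / (1 - t\<^sup>2))) (at t)"
      using \<open>\<bar>t\<bar> < 1\<close> by (auto intro!: derivative_eq_intros simp: e_def)
    then have "(v has_vector_derivative
        of_real e * d\<Phi> t + of_real (e * (\<epsilon> / (1 - t\<^sup>2))) * \<Phi> t) (at t)"
      unfolding v_def[abs_def] e_def using sol[OF t]
      by (intro has_vector_derivative_mult has_vector_derivative_of_real) auto
    moreover have "of_real e * d\<Phi> t + of_real (e * (\<epsilon> / (1 - t\<^sup>2))) * \<Phi> t
        = \<mu> * of_real (e / (1 - t\<^sup>2)) * (complex_of_real (1 - t\<^sup>2) * d\<Psi> t)"
    proof -
      have eq: "d\<Phi> t + complex_of_real (\<epsilon> / (1 - t\<^sup>2)) * \<Phi> t = \<mu> * d\<Psi> t"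
        using sol[OF t] by blast
      have e: "of_real e = of_real (e / (1 - t\<^sup>2)) * complex_of_real (1 - t\<^sup>2)"
        using \<open>1 - t\<^sup>2 \<noteq> 0\<close> by (metis nonzero_eq_divide_eq of_real_mult)
      have "of_real e * d\<Phi> t + of_real (e * (\<epsilon> / (1 - t\<^sup>2))) * \<Phi> t
          = of_real e * (d\<Phi> t + complex_of_real (\<epsilon> / (1 - t\<^sup>2)) * \<Phi> t)"
        by (simp only: of_real_mult mult.assoc distrib_left)
      also have "\<dots> = of_real e * (\<mu> * d\<Psi> t)"
        by (simp only: eq)
      also have "\<dots> = \<mu> * of_real (e / (1 - t\<^sup>2)) * (complex_of_real (1 - t\<^sup>2) * d\<Psi> t)"
        by (subst e) (simp only: ac_simps)
      finally show ?thesis .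
    qed
    ultimately show "(v has_vector_derivative \<mu> * of_real (exp (\<epsilon> * artanh t) / (1 - t\<^sup>2)) *
        (complex_of_real (1 - t\<^sup>2) * d\<Psi> t)) (at t)"
      by (simp only: e_def)
  qed
  then show ?thesis by (rule that)
qed

lemma boundary_cond_tendsto_0:
  assumes "boundary_cond x0 d\<Psi>" "x0 \<le> 1"
  shows "((\<lambda>t. complex_of_real (1 - t\<^sup>2) * d\<Psi> t) \<longlongrightarrow> 0) (at_left x0)"
    and "((\<lambda>t. complex_of_real (1 - t\<^sup>2) * d\<Psi> t) \<longlongrightarrow> 0) (at_right (-x0))"
proof -
  have "((\<lambda>t. complex_of_real (1 - t\<^sup>2) * d\<Psi> t) \<longlongrightarrow> 0) (at_left x0) \<and>
      ((\<lambda>t. complex_of_real (1 - t\<^sup>2) * d\<Psi> t) \<longlongrightarrow> 0) (at_right (-x0))"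
  proof (cases "x0 < 1")
    case True
    then have d_r: "(d\<Psi> \<longlongrightarrow> 0) (at_left x0)" and d_l: "(d\<Psi> \<longlongrightarrow> 0) (at_right (-x0))"
      using assms(1) by (auto simp: boundary_cond_def)
    have "((\<lambda>t. complex_of_real (1 - t\<^sup>2) * d\<Psi> t) \<longlongrightarrow> complex_of_real (1 - x0\<^sup>2) * 0) (at_left x0)"
      by (intro tendsto_intros d_r)
    moreover have "((\<lambda>t. complex_of_real (1 - t\<^sup>2) * d\<Psi> t)
        \<longlongrightarrow> complex_of_real (1 - (-x0)\<^sup>2) * 0) (at_right (-x0))"
      by (intro tendsto_intros d_l)
    ultimately show ?thesis by simp
  next
    case False
    then show ?thesis using assms by (simp add: boundary_cond_def)
  qed
  then show "((\<lambda>t. complex_of_real (1 - t\<^sup>2) * d\<Psi> t) \<longlongrightarrow> 0) (at_left x0)"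
    "((\<lambda>t. complex_of_real (1 - t\<^sup>2) * d\<Psi> t) \<longlongrightarrow> 0) (at_right (-x0))" by blast+
qed

lemma first_order_system_Bfun_interior:
  assumes sys: "first_order_system \<epsilon> \<mu> x0 w v" and "0 < x0" "x0 < 1"
    and w_r: "(w \<longlongrightarrow> 0) (at_left x0)" and w_l: "(w \<longlongrightarrow> 0) (at_right (-x0))"
  shows "Bfun v (at_left x0)" "Bfun v (at_right (-x0))"
proof -
  define \<kappa> where "\<kappa> t = exp (\<epsilon> * artanh t) / (1 - t\<^sup>2)" for t
  define v' where "v' t = \<mu> * of_real (\<kappa> t) * w t" for t
  have v': "(v has_vector_derivative v' t) (at t)" if "-x0 < t" "t < x0" for t
    using sys that by (simp add: first_order_system_def v'_def \<kappa>_def)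
  have "(\<kappa> \<longlongrightarrow> \<kappa> y) (at y)" if "\<bar>y\<bar> < 1" for y
  proof -
    have "y\<^sup>2 < 1" using that by (simp add: abs_square_less_1)
    then show ?thesis
      using that unfolding \<kappa>_def by (intro tendsto_intros) auto
  qed
  then have \<kappa>_r: "(\<kappa> \<longlongrightarrow> \<kappa> x0) (at_left x0)" and \<kappa>_l: "(\<kappa> \<longlongrightarrow> \<kappa> (-x0)) (at_right (-x0))"
    using assms by (auto intro: tendsto_mono[OF at_le[OF subset_UNIV]])
  have "(v' \<longlongrightarrow> \<mu> * of_real (\<kappa> x0) * 0) (at_left x0)"
    unfolding v'_def by (intro tendsto_mult tendsto_of_real tendsto_const w_r \<kappa>_r)
  then have "\<forall>\<^sub>F t in at_left x0. norm (v' t) < 1"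
    using order_tendstoD(2)[OF tendsto_norm_zero zero_less_one] by simp
  moreover have "\<forall>\<^sub>F t in at_left x0. t \<in> {-x0<..<x0}"
    using \<open>0 < x0\<close> by (intro eventually_at_left_real) simp
  ultimately have "\<forall>\<^sub>F t in at_left x0. (v has_vector_derivative v' t) (at t) \<and>
      ((\<lambda>t. t) has_real_derivative 1) (at t) \<and> norm (v' t) \<le> 1 \<and> t \<le> x0"
    by eventually_elim (auto intro: v')
  then show "Bfun v (at_left x0)" by (rule Bfun_at_left_of_deriv_bound)
  have "(v' \<longlongrightarrow> \<mu> * of_real (\<kappa> (-x0)) * 0) (at_right (-x0))"
    unfolding v'_def by (intro tendsto_mult tendsto_of_real tendsto_const w_l \<kappa>_l)
  then have "\<forall>\<^sub>F t in at_right (-x0). norm (v' t) < 1"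
    using order_tendstoD(2)[OF tendsto_norm_zero zero_less_one] by simp
  moreover have "\<forall>\<^sub>F t in at_right (-x0). t \<in> {-x0<..<x0}"
    using \<open>0 < x0\<close> by (intro eventually_at_right_real) simp
  ultimately have "\<forall>\<^sub>F t in at_right (-x0). (v has_vector_derivative v' t) (at t) \<and>
      ((\<lambda>t. t) has_real_derivative 1) (at t) \<and> norm (v' t) \<le> 1 \<and> -x0 \<le> t"
    by eventually_elim (auto intro: v')
  then show "Bfun v (at_right (-x0))" by (rule Bfun_at_right_of_deriv_bound)
qed

lemma first_order_system_Bfun_at_1:
  assumes sys: "first_order_system \<epsilon> \<mu> 1 w v" and "0 \<le> \<epsilon>" and w0: "(w \<longlongrightarrow> 0) (at_left 1)"
  shows "Bfun v (at_left 1)"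
proof (rule singular_endpoint_Bfun[where b = 0 and a = "\<epsilon> / 2" and K = "2 powr (\<epsilon> / 2)"
      and \<rho> = "\<lambda>t. exp (- \<epsilon> * artanh t)" and \<kappa> = "\<lambda>t. exp (\<epsilon> * artanh t) / (1 - t\<^sup>2)"])
  fix t :: real assume t: "0 < t" "t < 1"
  then have "1 - t\<^sup>2 > 0" by (simp add: abs_square_less_1)
  then show "\<bar>exp (\<epsilon> * artanh t) / (1 - t\<^sup>2)\<bar> \<le> 2 powr (\<epsilon> / 2) * (1 - t) powr (- (\<epsilon> / 2) - 1)"
    using exp_artanh_div_le_nonneg[of t \<epsilon>] t \<open>0 \<le> \<epsilon>\<close> by simp
  show "\<bar>exp (- \<epsilon> * artanh t)\<bar> \<le> (1 - t) powr (\<epsilon> / 2)"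
    using exp_neg_artanh_le[of t \<epsilon>] t \<open>0 \<le> \<epsilon>\<close> by simp
qed (use sys w0 \<open>0 \<le> \<epsilon>\<close> in \<open>auto simp: first_order_system_def\<close>)

lemma first_order_system_Bfun_at_minus_1:
  assumes sys: "first_order_system \<epsilon> \<mu> 1 w v" and "0 < \<epsilon>" and w0: "(w \<longlongrightarrow> 0) (at_right (-1))"
  shows "Bfun v (at_right (-1))"
proof -
  define g where "g t = cmod \<mu> * ((1 + t) powr (\<epsilon> / 2) / (\<epsilon> / 2))" for t
  have "\<forall>\<^sub>F t in at_right (-1). norm (w t) < 1"
    using order_tendstoD(2)[OF tendsto_norm_zero[OF w0] zero_less_one] .
  moreover have "\<forall>\<^sub>F t in at_right (-1). t \<in> {-1<..<(0::real)}"
    by (rule eventually_at_right_real) simp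
  ultimately have "\<forall>\<^sub>F t in at_right (-1).
      (v has_vector_derivative \<mu> * of_real (exp (\<epsilon> * artanh t) / (1 - t\<^sup>2)) * w t) (at t) \<and>
      (g has_real_derivative cmod \<mu> * (1 + t) powr (\<epsilon> / 2 - 1)) (at t) \<and>
      norm (\<mu> * of_real (exp (\<epsilon> * artanh t) / (1 - t\<^sup>2)) * w t) \<le> cmod \<mu> * (1 + t) powr (\<epsilon> / 2 - 1) \<and>
      0 \<le> g t"
  proof eventually_elim
    case (elim t)
    then have "1 - t\<^sup>2 > 0" by (simp add: abs_square_less_1)
    have "norm (\<mu> * of_real (exp (\<epsilon> * artanh t) / (1 - t\<^sup>2)) * w t)
        = cmod \<mu> * (exp (\<epsilon> * artanh t) / (1 - t\<^sup>2) * norm (w t))"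
      using \<open>1 - t\<^sup>2 > 0\<close> by (simp only: norm_mult norm_of_real abs_of_pos mult.assoc) simp
    also have "\<dots> \<le> cmod \<mu> * ((1 + t) powr (\<epsilon> / 2 - 1) * 1)"
      using elim exp_artanh_div_le_nonpos[of t \<epsilon>] \<open>0 < \<epsilon>\<close> \<open>1 - t\<^sup>2 > 0\<close>
      by (intro mult_left_mono mult_mono) auto
    finally have "norm (\<mu> * of_real (exp (\<epsilon> * artanh t) / (1 - t\<^sup>2)) * w t)
        \<le> cmod \<mu> * (1 + t) powr (\<epsilon> / 2 - 1)"
      by simp
    moreover have "(g has_real_derivative cmod \<mu> * (1 + t) powr (\<epsilon> / 2 - 1)) (at t)"
      unfolding g_def using elim \<open>0 < \<epsilon>\<close>
      by (auto intro!: derivative_eq_intros simp: powr_diff field_simps)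
    ultimately show ?case
      using sys elim \<open>0 < \<epsilon>\<close> by (auto simp: first_order_system_def g_def)
  qed
  then show ?thesis by (rule Bfun_at_right_of_deriv_bound)
qed

lemma first_order_system_reflect:
  assumes "first_order_system 0 \<mu> x0 w v"
  shows "first_order_system 0 \<mu> x0 (\<lambda>t. w (- t)) (\<lambda>t. - v (- t))"
  unfolding first_order_system_def
proof (intro ballI conjI)
  fix t assume "t \<in> {-x0<..<x0}"
  then have "- t \<in> {-x0<..<x0}" by auto
  then have w': "(w has_vector_derivative v (- t)) (at (- t))"
    and v': "(v has_vector_derivative \<mu> * of_real (1 / (1 - t\<^sup>2)) * w (- t)) (at (- t))"
    using assms unfolding first_order_system_def by (auto dest!: bspec[of _ _ "- t"])
  show "((\<lambda>t. w (- t)) has_vector_derivative of_real (exp (- 0 * artanh t)) * - v (- t)) (at t)"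
    using has_vector_derivative_reflect[OF w'] by simp
  show "((\<lambda>t. - v (- t)) has_vector_derivative
      \<mu> * of_real (exp (0 * artanh t) / (1 - t\<^sup>2)) * w (- t)) (at t)"
    using has_vector_derivative_minus[OF has_vector_derivative_reflect[OF v']] by simp
qed

lemma first_order_system_Bfun:
  assumes sys: "first_order_system \<epsilon> \<mu> x0 w v" and "0 < x0" "x0 \<le> 1" "0 \<le> \<epsilon>"
    and w_r: "(w \<longlongrightarrow> 0) (at_left x0)" and w_l: "(w \<longlongrightarrow> 0) (at_right (-x0))"
  shows "Bfun v (at_left x0)" "Bfun v (at_right (-x0))"
proof -
  have "Bfun v (at_left x0) \<and> Bfun v (at_right (-x0))"
  proof (cases "x0 < 1")
    case True
    then show ?thesis using first_order_system_Bfun_interior[OF sys \<open>0 < x0\<close> True w_r w_l] by blast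
  next
    case False
    with \<open>x0 \<le> 1\<close> have [simp]: "x0 = 1" by simp
    (* For eps > 0 the coefficient kappa is integrable at -1; for eps = 0 the system is
       invariant under x -> -x and the end -1 is reduced to the end 1. *)
    have "Bfun v (at_right (-1))"
    proof (cases "\<epsilon> = 0")
      case True
      have "((\<lambda>t. w (- t)) \<longlongrightarrow> 0) (at_left 1)"
        using w_l by (simp add: at_right_minus filterlim_filtermap)
      with first_order_system_reflect[OF sys[unfolded True]]
      have "Bfun (\<lambda>t. - v (- t)) (at_left 1)"
        using \<open>x0 = 1\<close> first_order_system_Bfun_at_1 by blast
      then show ?thesis
        by (simp add: Bfun_def at_right_minus[of "-1"] eventually_filtermap)
    next
      case False
      then show ?thesis
        using first_order_system_Bfun_at_minus_1[of \<epsilon> \<mu> w v] sys \<open>0 \<le> \<epsilon>\<close> w_l by simp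
    qed
    then show ?thesis
      using first_order_system_Bfun_at_1[of \<epsilon> \<mu> w v] sys \<open>0 \<le> \<epsilon>\<close> w_r by simp
  qed
  then show "Bfun v (at_left x0)" "Bfun v (at_right (-x0))" by blast+
qed

lemma first_order_system_eigenvalue_neg:
  assumes sys: "first_order_system \<epsilon> \<mu> x0 w v" and "0 < x0" "x0 \<le> 1" "0 \<le> \<epsilon>"
    and w0: "(w \<longlongrightarrow> 0) (at_left x0)" "(w \<longlongrightarrow> 0) (at_right (-x0))"
    and x: "x \<in> {-x0<..<x0}" "w x \<noteq> 0" and "\<mu> \<noteq> 0"
  shows "\<mu> \<in> \<real> \<and> Re \<mu> < 0"
proof (rule eigenvalue_neg_real_if_flux_vanishes[where \<rho> = "\<lambda>t. exp (- \<epsilon> * artanh t)"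
      and \<kappa> = "\<lambda>t. exp (\<epsilon> * artanh t) / (1 - t\<^sup>2)" and v = v and w = w and x = x])
  show "0 < exp (\<epsilon> * artanh t) / (1 - t\<^sup>2)" if "-x0 < t" "t < x0" for t
  proof -
    have "\<bar>t\<bar> < 1" using that \<open>x0 \<le> 1\<close> by auto
    then show ?thesis by (simp add: abs_square_less_1)
  qed
qed (use sys[unfolded first_order_system_def] first_order_system_Bfun[OF assms(1-6)] w0 x \<open>\<mu> \<noteq> 0\<close>
    in \<open>auto intro: Bfun_mult_cnj_tendsto_0\<close>)

lemma nonconstant_eigen_solution_flux_nonzero:
  assumes "classical_eigen_solution x0 \<epsilon> \<mu> \<Psi> d\<Psi>" "x0 \<le> 1"
    and "\<not> (\<exists>c. \<forall>x\<in>{-x0<..<x0}. \<Psi> x = c)"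
  obtains x where "x \<in> {-x0<..<x0}" "complex_of_real (1 - x\<^sup>2) * d\<Psi> x \<noteq> 0"
proof -
  have "(\<Psi> has_vector_derivative d\<Psi> t) (at t)" if "t \<in> {-x0<..<x0}" for t
    using assms(1) that unfolding classical_eigen_solution_def by blast
  then obtain x where x: "x \<in> {-x0<..<x0}" "d\<Psi> x \<noteq> 0"
    using vector_derivative_nonzero_if_nonconstant[OF convex_real_interval(8) _ assms(3)] by blast
  then have "\<bar>x\<bar> < 1" using \<open>x0 \<le> 1\<close> by auto
  then have "x\<^sup>2 < 1" by (simp add: abs_square_less_1)
  then have "complex_of_real (1 - x\<^sup>2) \<noteq> 0" by (simp only: of_real_eq_0_iff)
  with x show ?thesis using that by simp
qed

theorem theorem7:
  fixes x0 \<epsilon> :: real and \<mu> :: complex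
  assumes "0 < x0" and "x0 \<le> 1" and "0 \<le> \<epsilon>"
    and "is_eigenvalue x0 \<epsilon> \<mu>" and "\<mu> \<noteq> 0"
  shows "\<mu> \<in> \<real> \<and> Re \<mu> < 0"
proof -
  obtain \<Psi> d\<Psi> where sol: "classical_eigen_solution x0 \<epsilon> \<mu> \<Psi> d\<Psi>" and bc: "boundary_cond x0 d\<Psi>"
    and nonconst: "\<not> (\<exists>c. \<forall>x\<in>{-x0<..<x0}. \<Psi> x = c)"
    using assms(4) unfolding is_eigenvalue_def by blast
  define w where "w t = complex_of_real (1 - t\<^sup>2) * d\<Psi> t" for t
  obtain v where sys: "first_order_system \<epsilon> \<mu> x0 w v"
    using classical_eigen_solution_first_order_system[OF sol \<open>x0 \<le> 1\<close>] unfolding w_def[abs_def] .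
  have w0: "(w \<longlongrightarrow> 0) (at_left x0)" "(w \<longlongrightarrow> 0) (at_right (-x0))"
    using boundary_cond_tendsto_0[OF bc \<open>x0 \<le> 1\<close>] unfolding w_def[abs_def] .
  obtain x where "x \<in> {-x0<..<x0}" "w x \<noteq> 0"
    using nonconstant_eigen_solution_flux_nonzero[OF sol \<open>x0 \<le> 1\<close> nonconst] unfolding w_def by blast
  then show ?thesis
    using first_order_system_eigenvalue_neg[OF sys assms(1-3) w0] \<open>\<mu> \<noteq> 0\<close> by blast
qed

end
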